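(* Let $r, l, h, l', m, n$ be positive integers and let $$P = \left\{ \left( \left\lfloor \tfrac{y}{h} \right\rfloor l' + t,\; y \right) : t \in \{0,\dots,l-1\},\ y \in \{0,\dots,rh-1\} \right\}$$ be the structured dense polygon with parameters $(r,l,h,l')$. Let $\kappa = \gcd(m,h)$, $m = \tau_m \kappa$, $h = \tau_h \kappa$, and write $\tau_m = \alpha \tau_h + \beta$ with integers $\alpha \ge 0$ and $0 \le \beta < \tau_h$. Assume $\tau_m$ divides $r$. Then the number $\lambda_{naive}$ of thread blocks produced by the Naive Tiling Algorithm on $P$ with $m \times n$ thread blocks is $$\lambda_{naive} = \begin{cases} \dfrac{r}{\tau_m}\left( \tau_h \left\lceil \dfrac{l + (\alpha-1) l'}{n} \right\rceil \right) & \text{if } \beta = 0,\\[2ex] \dfrac{r}{\tau_m}\left( (\beta-1) \left\lceil \dfrac{l + (\alpha+1) l'}{n} \right\rceil + (\tau_h - \beta + 1)\left\lceil \dfrac{l + \alpha l'}{n} \right\rceil \right) & \text{if } \beta \neq 0. \end{cases}$$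
   Context: Points are pairs $(x,y)$ with $x$ the column index and $y$ the row index. For the structured dense polygon $P$ with parameters $(r,l,h,l')$, the $q$-th slab ($q = 0,\dots,r-1$) is the set of rows $\{qh, \dots, (q+1)h - 1\}$; rows in slab $q$ contain exactly the columns $ql', \dots, ql' + l - 1$. The Naive Tiling Algorithm (with thread blocks of size $m \times n$) partitions the rows $\{0,\dots,rh-1\}$ into consecutive patches of $m$ rows, the $k$-th patch ($k = 1, \dots, rh/m$) being rows $\{(k-1)m, \dots, km-1\}$, and tiles each patch from left to right. If the $k$-th patch intersects (in rows) exactly $t_k \ge 1$ slabs, its width is defined as $w^{(k)} = l + (t_k - 1) l'$, and the algorithm uses $\lceil w^{(k)}/n \rceil$ thread blocks for that patch; thus $\lambda_{naive} = \sum_{k=1}^{rh/m} \lceil w^{(k)}/n \rceil$. *)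

theory Defs
  imports Complex_Main
begin

text \<open>Structured dense polygon with parameters (r,l,h,l'): points (x,y),
  x = column, y = row.\<close>
definition sdp :: "nat \<Rightarrow> nat \<Rightarrow> nat \<Rightarrow> nat \<Rightarrow> (nat \<times> nat) set" where
  "sdp r l h l' = {((y div h) * l' + t, y) | t y. t < l \<and> y < r * h}"

definition patch_rows :: "nat \<Rightarrow> nat \<Rightarrow> nat set" where
  "patch_rows m k = {(k - 1) * m ..< k * m}"

text \<open>Number of slabs of P (slab q = rows {q h ..< (q+1) h}) intersected by the k-th patch.\<close>
definition slabs_hit :: "nat \<Rightarrow> nat \<Rightarrow> nat \<Rightarrow> nat \<Rightarrow> nat \<Rightarrow> nat \<Rightarrow> nat" where
  "slabs_hit r l h l' m k = card {y div h | x y. (x, y) \<in> sdp r l h l' \<and> y \<in> patch_rows m k}"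

definition patch_width :: "nat \<Rightarrow> nat \<Rightarrow> nat \<Rightarrow> nat \<Rightarrow> nat \<Rightarrow> nat \<Rightarrow> nat" where
  "patch_width r l h l' m k = l + (slabs_hit r l h l' m k - 1) * l'"

definition lambda_naive :: "nat \<Rightarrow> nat \<Rightarrow> nat \<Rightarrow> nat \<Rightarrow> nat \<Rightarrow> nat \<Rightarrow> int" where
  "lambda_naive r l h l' m n =
     (\<Sum>k = 1..(r * h) div m. \<lceil>real (patch_width r l h l' m k) / real n\<rceil>)"

end

(* A patch of m rows starting at row y meets 1 + ((y + m - 1) div h - y div h) slabs. This count
   depends only on y mod h and does not change when m, h and y are divided by kappa. Patches start
   at the rows i m, and m tau_h = tau_m h, so the counts are periodic in i with period tau_h; the
   r h / m patches form r / tau_m full periods. Since tau_m and tau_h are coprime, i tau_m mod tau_h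
   runs through every residue j < tau_h within one period, and the patch of residue j crosses
   (j + tau_m - 1) div tau_h slab boundaries: alpha if j + beta <= tau_h and alpha + 1 otherwise
   (alpha - 1 if beta = 0, which forces tau_h = 1). *)

theory Submission
  imports Defs "HOL-Number_Theory.Cong"
begin

lemma image_div_atLeastLessThan:
  fixes a b h :: nat
  assumes "a < b" "0 < h"
  shows "(\<lambda>y. y div h) ` {a..<b} = {a div h .. (b - 1) div h}"
proof
  show "(\<lambda>y. y div h) ` {a..<b} \<subseteq> {a div h .. (b - 1) div h}"
    by (auto intro!: div_le_mono)
  show "{a div h .. (b - 1) div h} \<subseteq> (\<lambda>y. y div h) ` {a..<b}"
  proof
    fix q assume q: "q \<in> {a div h .. (b - 1) div h}"
    show "q \<in> (\<lambda>y. y div h) ` {a..<b}"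
    proof (cases "q * h \<le> a")
      case True
      then have "q = a div h"
        using q assms by (simp add: le_antisym less_eq_div_iff_mult_less_eq)
      then show ?thesis
        using assms by auto
    next
      case False
      then have "q * h \<in> {a..<b}"
        using q assms by (auto simp: less_eq_div_iff_mult_less_eq)
      then show ?thesis
        using assms by (metis image_eqI nonzero_mult_div_cancel_right not_gr0)
    qed
  qed
qed

definition slab_crossings :: "nat \<Rightarrow> nat \<Rightarrow> nat \<Rightarrow> nat" where
  "slab_crossings h m y = (y + m - 1) div h - y div h"

lemma slab_crossings_eq_mod:
  assumes "0 < m"
  shows "slab_crossings h m y = (y mod h + m - 1) div h"
proof (cases "h = 0")
  case False
  have "y + m - 1 = (y mod h + m - 1) + y div h * h"
    using assms by simp
  then show ?thesis
    unfolding slab_crossings_def using False by simp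
qed (simp add: slab_crossings_def)

lemma slab_crossings_add_mult_period:
  assumes "0 < m"
  shows "slab_crossings h m (y + c * h) = slab_crossings h m y"
  using assms by (simp add: slab_crossings_eq_mod)

lemma slab_crossings_mult_cancel:
  assumes "0 < m" "0 < \<kappa>"
  shows "slab_crossings (h * \<kappa>) (m * \<kappa>) (y * \<kappa>) = slab_crossings h m y"
proof -
  have "(y * \<kappa> + m * \<kappa> - 1) div \<kappa> = y + m - 1"
  proof (rule div_nat_eqI)
    show "\<kappa> * (y + m - 1) \<le> y * \<kappa> + m * \<kappa> - 1"
      using assms by (simp add: algebra_simps diff_mult_distrib2)
    show "y * \<kappa> + m * \<kappa> - 1 < \<kappa> * Suc (y + m - 1)"
      using assms by (simp add: algebra_simps)
  qed
  then show ?thesis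
    unfolding slab_crossings_def using assms
    by (simp add: div_mult2_eq mult.commute[of h])
qed

lemma slabs_hit_Suc:
  assumes "0 < l" "0 < h" "0 < m" "Suc i * m \<le> r * h"
  shows "slabs_hit r l h l' m (Suc i) = Suc (slab_crossings h m (i * m))"
proof -
  have "{y div h | x y. (x, y) \<in> sdp r l h l' \<and> y \<in> patch_rows m (Suc i)}
        = (\<lambda>y. y div h) ` {i * m ..< i * m + m}"
  proof (intro equalityI subsetI)
    fix z assume "z \<in> (\<lambda>y. y div h) ` {i * m ..< i * m + m}"
    then obtain y where y: "y \<in> {i * m ..< i * m + m}" "z = y div h"
      by blast
    then have "((y div h) * l' + 0, y) \<in> sdp r l h l'"
      unfolding sdp_def using assms by auto
    moreover have "y \<in> patch_rows m (Suc i)"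
      using y unfolding patch_rows_def by simp
    ultimately show "z \<in> {y div h | x y. (x, y) \<in> sdp r l h l' \<and> y \<in> patch_rows m (Suc i)}"
      using y by blast
  qed (auto simp: patch_rows_def)
  also have "\<dots> = {i * m div h .. (i * m + m - 1) div h}"
    using assms by (simp add: image_div_atLeastLessThan)
  finally show ?thesis
    unfolding slabs_hit_def slab_crossings_def using assms
    by (simp add: Suc_diff_le div_le_mono)
qed

lemma lambda_naive_eq_sum_slab_crossings:
  assumes "0 < l" "0 < h" "0 < m"
  shows "lambda_naive r l h l' m n =
    (\<Sum>i < r * h div m. \<lceil>real (l + slab_crossings h m (i * m) * l') / real n\<rceil>)"
proof -
  have "patch_width r l h l' m (Suc i) = l + slab_crossings h m (i * m) * l'"
    if "i < r * h div m" for i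
  proof -
    have "Suc i * m \<le> r * h"
      using that assms(3) by (metis Suc_leI less_eq_div_iff_mult_less_eq)
    then show ?thesis
      unfolding patch_width_def using assms slabs_hit_Suc by simp
  qed
  then show ?thesis
    unfolding lambda_naive_def by (simp add: sum.atLeast1_atMost_eq)
qed

lemma sum_lessThan_mult_periodic:
  fixes g :: "nat \<Rightarrow> 'a::comm_semiring_1"
  assumes "\<And>i. g (i + p) = g i"
  shows "(\<Sum>i < c * p. g i) = of_nat c * (\<Sum>i < p. g i)"
proof -
  have shift: "g (i + k * p) = g i" for i k
    by (induction k) (simp_all, metis add.assoc add.commute assms)
  have "(\<Sum>i\<in>{k * p ..< k * p + p}. g i) = (\<Sum>i < p. g i)" for k
    using sum.shift_bounds_nat_ivl[of g 0 "k * p" p] by (simp add: atLeast0LessThan shift add.commute)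
  then show ?thesis
    using sum.nat_group[of g p c] by simp
qed

lemma bij_betw_mult_mod:
  fixes a p :: nat
  assumes "coprime a p"
  shows "bij_betw (\<lambda>i. i * a mod p) {..<p} {..<p}"
proof -
  have inj: "inj_on (\<lambda>i. i * a mod p) {..<p}"
  proof (rule inj_onI)
    fix i j assume "i \<in> {..<p}" "j \<in> {..<p}" "i * a mod p = j * a mod p"
    then show "i = j"
      using assms by (metis cong_def cong_less_modulus_unique_nat cong_mult_rcancel_nat lessThan_iff)
  qed
  moreover have "(\<lambda>i. i * a mod p) ` {..<p} = {..<p}"
    by (rule endo_inj_surj) (auto intro: inj)
  ultimately show ?thesis
    by (simp add: bij_betw_def)
qed

lemma sum_slab_crossings_over_period:
  assumes "coprime m h" "0 < m"
  shows "(\<Sum>i < h. F (slab_crossings h m (i * m))) = (\<Sum>j < h. F ((j + m - 1) div h))"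
  using sum.reindex_bij_betw[OF bij_betw_mult_mod[OF assms(1)], of "\<lambda>j. F ((j + m - 1) div h)"]
  by (simp add: slab_crossings_eq_mod assms(2))

lemma sum_lessThan_div_eq:
  fixes F :: "nat \<Rightarrow> 'a::comm_semiring_1"
  assumes "0 < \<beta>" "\<beta> < t"
  shows "(\<Sum>j < t. F ((j + \<alpha> * t + \<beta> - 1) div t))
    = of_nat (t - \<beta> + 1) * F \<alpha> + of_nat (\<beta> - 1) * F (Suc \<alpha>)"
proof -
  have quotient: "(j + \<alpha> * t + \<beta> - 1) div t = (if j < t - \<beta> + 1 then \<alpha> else Suc \<alpha>)"
    if "j < t" for j
  proof -
    have "j + \<alpha> * t + \<beta> - 1 = (j + \<beta> - 1) + \<alpha> * t"
      using assms by simp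
    then have "(j + \<alpha> * t + \<beta> - 1) div t = (j + \<beta> - 1) div t + \<alpha>"
      using assms by (metis add.commute div_mult_self1 gr_implies_not0)
    moreover have "(j + \<beta> - 1) div t = (if j < t - \<beta> + 1 then 0 else 1)"
      using that assms by (auto intro: div_less div_nat_eqI)
    ultimately show ?thesis
      using assms by simp
  qed
  have "(\<Sum>j < t. F ((j + \<alpha> * t + \<beta> - 1) div t))
      = (\<Sum>j < t - \<beta> + 1. F ((j + \<alpha> * t + \<beta> - 1) div t))
      + (\<Sum>j \<in> {t - \<beta> + 1..<t}. F ((j + \<alpha> * t + \<beta> - 1) div t))"
    using assms by (simp only: lessThan_atLeast0 sum.atLeastLessThan_concat)
  also have "\<dots> = (\<Sum>j < t - \<beta> + 1. F \<alpha>) + (\<Sum>j \<in> {t - \<beta> + 1..<t}. F (Suc \<alpha>))"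
    using assms quotient by (intro arg_cong2[where f = "(+)"] sum.cong) auto
  finally show ?thesis
    using assms by simp
qed

lemma lambda_naive_eq_period_sum:
  assumes "0 < l" "0 < m" "0 < h" "m = \<tau>m * \<kappa>" "h = \<tau>h * \<kappa>"
    and "coprime \<tau>m \<tau>h" "\<tau>m dvd r"
  shows "lambda_naive r l h l' m n =
    int (r div \<tau>m) * (\<Sum>j < \<tau>h. \<lceil>real (l + (j + \<tau>m - 1) div \<tau>h * l') / real n\<rceil>)"
proof -
  obtain s where r: "r = \<tau>m * s"
    using assms(7) by blast
  have pos: "0 < \<kappa>" "0 < \<tau>m"
    using assms(2,4) by simp_all
  define C where "C c = \<lceil>real (l + c * l') / real n\<rceil>" for c
  have "r * h div m = s * \<tau>h"
    using assms(2,4,5) r by (simp add: ac_simps)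
  then have "lambda_naive r l h l' m n = (\<Sum>i < s * \<tau>h. C (slab_crossings h m (i * m)))"
    using assms(1-3) by (simp add: lambda_naive_eq_sum_slab_crossings C_def)
  also have "\<dots> = of_nat s * (\<Sum>i < \<tau>h. C (slab_crossings h m (i * m)))"
  proof (rule sum_lessThan_mult_periodic)
    fix i
    have "(i + \<tau>h) * m = i * m + \<tau>m * h"
      using assms(4,5) by (simp add: algebra_simps)
    then show "C (slab_crossings h m ((i + \<tau>h) * m)) = C (slab_crossings h m (i * m))"
      using assms(2) by (simp add: slab_crossings_add_mult_period)
  qed
  also have "\<dots> = of_nat s * (\<Sum>i < \<tau>h. C (slab_crossings \<tau>h \<tau>m (i * \<tau>m)))"
    using slab_crossings_mult_cancel[OF pos(2,1), of \<tau>h "_ * \<tau>m"] assms(4,5)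
    by (simp add: mult.assoc)
  also have "\<dots> = of_nat s * (\<Sum>j < \<tau>h. C ((j + \<tau>m - 1) div \<tau>h))"
    using assms(6) pos by (simp add: sum_slab_crossings_over_period)
  finally show ?thesis
    using r pos unfolding C_def by simp
qed

theorem theorem8:
  fixes r l h l' m n \<kappa> \<tau>m \<tau>h \<alpha> \<beta> :: nat
  assumes "0 < r" "0 < l" "0 < h" "0 < l'" "0 < m" "0 < n"
    and "\<kappa> = gcd m h" "m = \<tau>m * \<kappa>" "h = \<tau>h * \<kappa>"
    and "\<tau>m = \<alpha> * \<tau>h + \<beta>" "\<beta> < \<tau>h"
    and "\<tau>m dvd r"
  shows "lambda_naive r l h l' m n =
    (if \<beta> = 0 then
       int (r div \<tau>m) * (int \<tau>h * \<lceil>(real l + (real \<alpha> - 1) * real l') / real n\<rceil>)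
     else
       int (r div \<tau>m) * ((int \<beta> - 1) * \<lceil>(real l + (real \<alpha> + 1) * real l') / real n\<rceil>
         + (int \<tau>h - int \<beta> + 1) * \<lceil>(real l + real \<alpha> * real l') / real n\<rceil>))"
proof -
  have "\<kappa> > 0"
    using assms(5,7) by simp
  then have "m div \<kappa> = \<tau>m" "h div \<kappa> = \<tau>h"
    using assms(8,9) by simp_all
  moreover have "coprime (m div \<kappa>) (h div \<kappa>)"
    using div_gcd_coprime[of m h] assms(5,7) by simp
  ultimately have "coprime \<tau>m \<tau>h"
    by simp
  then have period_sum: "lambda_naive r l h l' m n =
    int (r div \<tau>m) * (\<Sum>j < \<tau>h. \<lceil>real (l + (j + \<tau>m - 1) div \<tau>h * l') / real n\<rceil>)"
    using assms(2,3,5,8,9,12) by (simp add: lambda_naive_eq_period_sum)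
  show ?thesis
  proof (cases "\<beta> = 0")
    case True
    then have "\<tau>h = 1"
      using \<open>coprime \<tau>m \<tau>h\<close> assms(10) by simp
    moreover have "\<alpha> \<ge> 1"
      using True assms(5,8,10) \<open>\<tau>h = 1\<close> by (cases \<alpha>) simp_all
    ultimately show ?thesis
      using period_sum True assms(10) by (simp add: of_nat_diff)
  next
    case False
    define C where "C c = \<lceil>real (l + c * l') / real n\<rceil>" for c
    have "(\<Sum>j < \<tau>h. C ((j + \<tau>m - 1) div \<tau>h))
        = int (\<tau>h - \<beta> + 1) * C \<alpha> + int (\<beta> - 1) * C (Suc \<alpha>)"
      using sum_lessThan_div_eq[of \<beta> \<tau>h C \<alpha>] False assms(10,11) by (simp add: add.assoc)
    moreover have "C \<alpha> = \<lceil>(real l + real \<alpha> * real l') / real n\<rceil>"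
      and "C (Suc \<alpha>) = \<lceil>(real l + (real \<alpha> + 1) * real l') / real n\<rceil>"
      unfolding C_def by (simp_all add: algebra_simps)
    ultimately show ?thesis
      using period_sum False assms(11) unfolding C_def by (simp add: of_nat_diff)
  qed
qed

end
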